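(* Let $n\ge1$ be an integer and let $(V,\|\cdot\|_{4n})$ be a normed plane whose unit circle is an affine regular $4n$-gon. Then $$c_B(\|\cdot\|_{4n})=\Big(\cos\frac{\pi}{4n}\Big)^2.$$
   Context: A normed (Minkowski) plane $(V,\|\cdot\|)$ is a two-dimensional real vector space with a norm; $o$ is the origin, $B=\{v:\|v\|\le1\}$ the unit ball, $S=\{v:\|v\|=1\}$ the unit circle. An affine regular $m$-gon centered at $o$ is the image of a Euclidean regular $m$-gon centered at the origin under a linear bijection. For distinct $x,y$, $\mathrm{bis}(x,y)=\{z\in V:\|z-x\|=\|z-y\|\}$. For $x\in S$, the inner projection is $\mathrm{P_I}(x)=\{z/\|z\|: z\in(\mathrm{bis}(-x,x)\cap B)\setminus\{o\}\}$. The sine function is $s:S\times S\to\mathbb{R}$, $s(u,v)=\inf_{t\in\mathbb{R}}\|u+tv\|$. The constant $c_B$ is $c_B(\|\cdot\|)=\inf_{x\in S}\ \inf_{w\in\mathrm{P_I}(x)} s(w,x)$. *)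

theory Defs
  imports "HOL-Analysis.Analysis"
begin

definition is_norm :: "(real^2 \<Rightarrow> real) \<Rightarrow> bool" where
  "is_norm N \<longleftrightarrow> (\<forall>v. N v \<ge> 0) \<and> (\<forall>v. N v = 0 \<longleftrightarrow> v = 0)
     \<and> (\<forall>c v. N (c *\<^sub>R v) = \<bar>c\<bar> * N v) \<and> (\<forall>u v. N (u + v) \<le> N u + N v)"

definition unit_ball :: "(real^2 \<Rightarrow> real) \<Rightarrow> (real^2) set" where
  "unit_ball N = {v. N v \<le> 1}"

definition unit_circle :: "(real^2 \<Rightarrow> real) \<Rightarrow> (real^2) set" where
  "unit_circle N = {v. N v = 1}"

definition reg_vertex :: "nat \<Rightarrow> nat \<Rightarrow> real^2" where
  "reg_vertex m k = vector [cos (2 * pi * real k / real m), sin (2 * pi * real k / real m)]"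

definition regular_polygon :: "nat \<Rightarrow> (real^2) set" where
  "regular_polygon m = (\<Union>k<m. closed_segment (reg_vertex m k) (reg_vertex m (Suc k)))"

definition affine_regular_polygon :: "nat \<Rightarrow> (real^2) set \<Rightarrow> bool" where
  "affine_regular_polygon m P \<longleftrightarrow>
     (\<exists>T :: real^2 \<Rightarrow> real^2. linear T \<and> bij T \<and> P = T ` regular_polygon m)"

definition bis :: "(real^2 \<Rightarrow> real) \<Rightarrow> real^2 \<Rightarrow> real^2 \<Rightarrow> (real^2) set" where
  "bis N x y = {z. N (z - x) = N (z - y)}"

definition inner_proj :: "(real^2 \<Rightarrow> real) \<Rightarrow> real^2 \<Rightarrow> (real^2) set" where
  "inner_proj N x = {(1 / N z) *\<^sub>R z | z. z \<in> (bis N (-x) x \<inter> unit_ball N) - {0}}"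

definition sine_fn :: "(real^2 \<Rightarrow> real) \<Rightarrow> real^2 \<Rightarrow> real^2 \<Rightarrow> real" where
  "sine_fn N u v = (INF t\<in>(UNIV::real set). N (u + t *\<^sub>R v))"

definition c_B :: "(real^2 \<Rightarrow> real) \<Rightarrow> real" where
  "c_B N = (INF x\<in>unit_circle N. INF w\<in>inner_proj N x. sine_fn N w x)"

end

theory Submission
  imports Defs
begin

text \<open>Let \<open>T\<close> be the linear map carrying the regular \<open>4n\<close>-gon \<open>P\<close> onto the unit circle and
  measure Euclidean lengths after applying \<open>T\<^sup>-\<^sup>1\<close>; write \<open>h = pi/(4n)\<close>. Then
  \<open>cos h N(v) \<le> |T\<^sup>-\<^sup>1 v| \<le> N(v)\<close>. The key property of \<open>P\<close> is that any two of its points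
  satisfy \<open>cos h | |p|\<^sup>2 - |q|\<^sup>2 | \<le> 2 sin h |p \<times> q|\<close>. Applied to \<open>p, q = (z \<plusminus> x)/N(z + x)\<close>
  for \<open>z\<close> on the bisector of \<open>-x\<close> and \<open>x\<close>, it shows that \<open>z\<close> makes an angle of at least
  \<open>pi/2 - h\<close> with the line through \<open>x\<close>. Hence for \<open>w = z/N(z)\<close> every \<open>w + t x\<close> has Euclidean
  length at least \<open>cos h |w| \<ge> cos\<^sup>2 h\<close>, and so \<open>N(w + t x) \<ge> cos\<^sup>2 h\<close>. The bound is approached
  when \<open>x\<close> lies on an edge close to a vertex and \<open>w\<close> is the midpoint of the edge a quarter turn
  further on.\<close>

definition cross2 :: "real^2 \<Rightarrow> real^2 \<Rightarrow> real" where
  "cross2 u v = u$1 * v$2 - u$2 * v$1"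

lemma norm_vec2_power2: "(norm v)\<^sup>2 = (v$1)\<^sup>2 + (v$2)\<^sup>2" for v :: "real^2"
  by (simp add: norm_vec_def L2_set_def sum_2)

lemma inner_vec2: "u \<bullet> v = u$1 * v$1 + u$2 * v$2" for u v :: "real^2"
  by (simp add: inner_vec_def sum_2)

lemma lagrange_identity2: "(norm u)\<^sup>2 * (norm v)\<^sup>2 = (u \<bullet> v)\<^sup>2 + (cross2 u v)\<^sup>2"
  unfolding norm_vec2_power2 inner_vec2 cross2_def by (simp add: power2_eq_square algebra_simps)

lemma cross2_scaleR_left: "cross2 (a *\<^sub>R u) v = a * cross2 u v"
  by (simp add: cross2_def algebra_simps)

lemma cross2_scaleR_right: "cross2 u (a *\<^sub>R v) = a * cross2 u v"
  by (simp add: cross2_def algebra_simps)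

lemma abs_cross2_commute: "\<bar>cross2 v u\<bar> = \<bar>cross2 u v\<bar>"
  by (simp add: cross2_def abs_minus_commute mult.commute)

lemma cross2_add_scaleR_self: "cross2 (u + t *\<^sub>R v) v = cross2 u v"
  by (simp add: cross2_def algebra_simps)

lemma cross2_add_diff: "cross2 (u + v) (u - v) = - 2 * cross2 u v"
  by (simp add: cross2_def algebra_simps)

lemma norm_add_power2_diff: "(norm (u + v))\<^sup>2 - (norm (u - v))\<^sup>2 = 4 * (u \<bullet> v)"
  for u v :: "'a::real_inner"
  by (simp add: power2_norm_eq_inner algebra_simps inner_commute)

definition perp2 :: "real^2 \<Rightarrow> real^2" where
  "perp2 v = vector [- v$2, v$1]"

lemma norm_cos_sin_perp2: "norm (cos a *\<^sub>R v + sin a *\<^sub>R perp2 v) = norm v"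
proof -
  have "(sin a)\<^sup>2 + (cos a)\<^sup>2 = 1" by simp
  then have "(norm (cos a *\<^sub>R v + sin a *\<^sub>R perp2 v))\<^sup>2 = (norm v)\<^sup>2"
    unfolding norm_vec2_power2 perp2_def vector_add_component vector_scaleR_component vector_2 real_scaleR_def
    by algebra
  then show ?thesis by simp
qed

text \<open>The hypothesis says that the angle between \<open>u\<close> and the line \<open>\<real> v\<close> is at least
  \<open>arcsin c\<close>, so the distance from \<open>u\<close> to that line is at least \<open>c \<parallel>u\<parallel>\<close>.\<close>
lemma norm_add_scaleR_lower_bound:
  fixes u v :: "real^2"
  assumes "c \<ge> 0" "c\<^sup>2 + s\<^sup>2 = 1" "c * \<bar>u \<bullet> v\<bar> \<le> s * \<bar>cross2 u v\<bar>" "v \<noteq> 0"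
  shows "c * norm u \<le> norm (u + t *\<^sub>R v)"
proof -
  have "(c * \<bar>u \<bullet> v\<bar>)\<^sup>2 \<le> (s * \<bar>cross2 u v\<bar>)\<^sup>2"
    using assms(1,3) by (intro power_mono) auto
  then have "c\<^sup>2 * (u \<bullet> v)\<^sup>2 \<le> s\<^sup>2 * (cross2 u v)\<^sup>2"
    by (simp add: power_mult_distrib)
  then have "(c * norm u)\<^sup>2 * (norm v)\<^sup>2 \<le> (c\<^sup>2 + s\<^sup>2) * (cross2 u v)\<^sup>2"
    by (simp add: power_mult_distrib mult.assoc lagrange_identity2 algebra_simps)
  also have "\<dots> = (cross2 u v)\<^sup>2"
    using assms(2) by simp
  also have "\<dots> \<le> (norm (u + t *\<^sub>R v))\<^sup>2 * (norm v)\<^sup>2"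
    using lagrange_identity2[of "u + t *\<^sub>R v" v] by (simp add: cross2_add_scaleR_self)
  finally have "(c * norm u)\<^sup>2 \<le> (norm (u + t *\<^sub>R v))\<^sup>2"
    using assms(4) by simp
  then show ?thesis
    by (rule power2_le_imp_le) simp
qed

lemma sin_le_cos_le_pi4:
  fixes x :: real
  assumes "0 \<le> x" "x \<le> pi/4"
  shows "sin x \<le> cos x"
proof -
  have "0 \<le> cos (2*x)" using assms by (intro cos_ge_zero) auto
  then have "(sin x)\<^sup>2 \<le> (cos x)\<^sup>2" by (simp add: cos_double)
  moreover have "0 \<le> cos x" using assms by (intro cos_ge_zero) auto
  ultimately show ?thesis by (simp add: abs_le_square_iff[symmetric])
qed

lemma sin_cos_bounds_symmetric_interval:
  fixes a x :: real
  assumes "0 \<le> a" "a \<le> pi/2" "a \<le> x" "x \<le> pi - a"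
  shows "sin a \<le> sin x" "\<bar>cos x\<bar> \<le> cos a"
proof -
  have "cos x \<le> cos a" using assms by (intro cos_monotone_0_pi_le) auto
  moreover have "cos (pi - a) \<le> cos x" using assms by (intro cos_monotone_0_pi_le) auto
  ultimately show abs_cos: "\<bar>cos x\<bar> \<le> cos a" by simp
  then have "\<bar>cos x\<bar> \<le> \<bar>cos a\<bar>" by simp
  then have "(sin a)\<^sup>2 \<le> (sin x)\<^sup>2" by (simp add: abs_le_square_iff sin_squared_eq)
  moreover have "0 \<le> sin x" using assms by (intro sin_ge_zero) auto
  ultimately show "sin a \<le> sin x" by (simp add: abs_le_square_iff[symmetric])
qed

definition rotated_point :: "real \<Rightarrow> real \<Rightarrow> real \<Rightarrow> real^2" where
  "rotated_point a c t = vector [c * cos a - t * sin a, c * sin a + t * cos a]"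

lemma norm_rotated_point: "(norm (rotated_point a c t))\<^sup>2 = c\<^sup>2 + t\<^sup>2"
proof -
  have "(sin a)\<^sup>2 + (cos a)\<^sup>2 = 1" by simp
  then show ?thesis unfolding norm_vec2_power2 rotated_point_def vector_2 by algebra
qed

lemma cross2_rotated_point:
  "cross2 (rotated_point a c t) (rotated_point b c u)
     = (c\<^sup>2 + t*u) * sin (b - a) + c * (u - t) * cos (b - a)"
  by (simp add: cross2_def rotated_point_def sin_diff cos_diff algebra_simps power2_eq_square)

lemma regular_polygon_memI:
  "k < m \<Longrightarrow> 0 \<le> u \<Longrightarrow> u \<le> 1 \<Longrightarrow>
     (1 - u) *\<^sub>R reg_vertex m k + u *\<^sub>R reg_vertex m (Suc k) \<in> regular_polygon m"
  unfolding regular_polygon_def closed_segment_def by blast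

text \<open>The edge from vertex \<open>k\<close> to vertex \<open>k + 1\<close> is the segment at distance
  \<open>cos (pi/m)\<close> from the origin, perpendicular to the direction \<open>(2k + 1) pi/m\<close>.\<close>
lemma regular_polygon_rotated_point:
  assumes "p \<in> regular_polygon m"
  obtains k t where "k < m" "\<bar>t\<bar> \<le> sin (pi/m)"
    "p = rotated_point ((2 * real k + 1) * (pi/m)) (cos (pi/m)) t"
proof -
  define h where "h = pi/m"
  obtain k where k: "k < m" "p \<in> closed_segment (reg_vertex m k) (reg_vertex m (Suc k))"
    using assms unfolding regular_polygon_def by auto
  then obtain u where u: "0 \<le> u" "u \<le> 1"
    "p = (1 - u) *\<^sub>R reg_vertex m k + u *\<^sub>R reg_vertex m (Suc k)"
    unfolding closed_segment_def by auto
  define a where "a = (2 * real k + 1) * h"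
  have "2 * pi * real k / real m = a - h" "2 * pi * real (Suc k) / real m = a + h"
    using k(1) unfolding a_def h_def by (simp_all add: field_simps)
  then have "p = rotated_point a (cos h) ((2*u - 1) * sin h)"
    unfolding u(3) reg_vertex_def rotated_point_def
    by (simp only:) (simp add: vec_eq_iff forall_2 cos_add cos_diff sin_add sin_diff algebra_simps)
  moreover have "\<bar>(2*u - 1) * sin h\<bar> \<le> sin h"
  proof -
    have "0 \<le> sin h" using k(1) unfolding h_def by (intro sin_ge_zero) (auto simp: field_simps)
    moreover have "\<bar>2*u - 1\<bar> \<le> 1" using u by auto
    ultimately show ?thesis by (simp add: abs_mult mult_left_le_one_le)
  qed
  ultimately show ?thesis using that k(1) unfolding a_def h_def by blast
qed

lemma regular_polygon_norm_bounds:
  assumes "p \<in> regular_polygon m"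
  shows "cos (pi/m) \<le> norm p" "norm p \<le> 1"
proof -
  obtain k t where t: "\<bar>t\<bar> \<le> sin (pi/m)"
    and p: "p = rotated_point ((2 * real k + 1) * (pi/m)) (cos (pi/m)) t"
    using regular_polygon_rotated_point[OF assms] .
  have np: "(norm p)\<^sup>2 = (cos (pi/m))\<^sup>2 + t\<^sup>2" unfolding p norm_rotated_point ..
  then have "\<bar>cos (pi/m)\<bar> \<le> \<bar>norm p\<bar>" by (subst abs_le_square_iff) simp
  then show "cos (pi/m) \<le> norm p" by simp
  have "t\<^sup>2 \<le> (sin (pi/m))\<^sup>2" using t by (simp add: abs_le_square_iff[symmetric])
  then have "(norm p)\<^sup>2 \<le> 1\<^sup>2" using np by (simp add: cos_squared_eq)
  then show "norm p \<le> 1" by (rule power2_le_imp_le) simp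
qed

text \<open>The right-hand side equals \<open>c (2s\<^sup>2 + 2tu + 2(c\<^sup>2 - s\<^sup>2)(s - t)(s + u))\<close>, and
  \<open>|t\<^sup>2 - u\<^sup>2| \<le> 2s\<^sup>2 + 2tu\<close> because \<open>t\<^sup>2, u\<^sup>2 \<le> s\<^sup>2\<close>.\<close>
lemma edge_cross_inequality_adjacent:
  fixes s c t u :: real
  assumes "0 < c" "c\<^sup>2 + s\<^sup>2 = 1" "s \<le> c" "\<bar>t\<bar> \<le> s" "\<bar>u\<bar> \<le> s"
  shows "c * \<bar>t\<^sup>2 - u\<^sup>2\<bar> \<le> 2 * s * ((c\<^sup>2 + t*u) * (2 * s * c) + c * (u - t) * (c\<^sup>2 - s\<^sup>2))"
proof -
  have rhs: "2 * s * ((c\<^sup>2 + t*u) * (2 * s * c) + c * (u - t) * (c\<^sup>2 - s\<^sup>2))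
      = c * (2 * s\<^sup>2 + 2*t*u + 2 * (c\<^sup>2 - s\<^sup>2) * ((s - t) * (s + u)))"
    using assms(2) by algebra
  have "0 \<le> c\<^sup>2 - s\<^sup>2" using assms by (simp add: abs_le_square_iff[symmetric])
  moreover have "0 \<le> (s - t) * (s + u)" using assms by (intro mult_nonneg_nonneg) auto
  moreover have "\<bar>t\<^sup>2 - u\<^sup>2\<bar> \<le> 2 * s\<^sup>2 + 2*t*u"
  proof -
    have "t\<^sup>2 \<le> s\<^sup>2" "u\<^sup>2 \<le> s\<^sup>2" using assms by (simp_all add: abs_le_square_iff[symmetric])
    moreover have "0 \<le> (t + u)\<^sup>2" by simp
    ultimately show ?thesis by (simp add: power2_sum abs_le_iff)
  qed
  ultimately have "\<bar>t\<^sup>2 - u\<^sup>2\<bar> \<le> 2 * s\<^sup>2 + 2*t*u + 2 * (c\<^sup>2 - s\<^sup>2) * ((s - t) * (s + u))"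
    by (smt (verit) mult_nonneg_nonneg)
  then show ?thesis unfolding rhs using assms(1) by (simp add: mult_left_mono)
qed

lemma edge_cross_inequality:
  fixes s c t u S C :: real
  assumes "0 < s" "0 < c" "c\<^sup>2 + s\<^sup>2 = 1" "s \<le> c" "\<bar>t\<bar> \<le> s" "\<bar>u\<bar> \<le> s"
    and "2 * s * c \<le> S" "\<bar>C\<bar> \<le> c\<^sup>2 - s\<^sup>2"
  shows "c * \<bar>t\<^sup>2 - u\<^sup>2\<bar> \<le> 2 * s * ((c\<^sup>2 + t*u) * S + c * (u - t) * C)"
proof -
  have "\<bar>t*u\<bar> \<le> s * s" using assms by (simp add: abs_mult mult_mono)
  moreover have "s * s \<le> c\<^sup>2" using assms by (simp add: power2_eq_square mult_mono)
  ultimately have "0 \<le> c\<^sup>2 + t*u" by linarith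
  then have S: "(c\<^sup>2 + t*u) * (2 * s * c) \<le> (c\<^sup>2 + t*u) * S"
    using assms(7) by (simp add: mult_left_mono)
  have "\<bar>c * (u - t) * C\<bar> \<le> c * \<bar>u - t\<bar> * (c\<^sup>2 - s\<^sup>2)"
    using assms(2,8) by (simp add: abs_mult mult_left_mono)
  then have C: "- (c * \<bar>u - t\<bar> * (c\<^sup>2 - s\<^sup>2)) \<le> c * (u - t) * C"
    by linarith
  have "c * \<bar>t\<^sup>2 - u\<^sup>2\<bar> \<le> 2 * s * ((c\<^sup>2 + t*u) * (2 * s * c) - c * \<bar>u - t\<bar> * (c\<^sup>2 - s\<^sup>2))"
  proof (cases "u \<le> t")
    case True
    then show ?thesis
      using edge_cross_inequality_adjacent[OF assms(2-6)] by (simp add: abs_of_nonpos algebra_simps)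
  next
    case False
    then show ?thesis
      using edge_cross_inequality_adjacent[OF assms(2-4,6,5)]
      by (simp add: abs_minus_commute[of "u\<^sup>2"] algebra_simps)
  qed
  also have "\<dots> \<le> 2 * s * ((c\<^sup>2 + t*u) * S + c * (u - t) * C)"
    using S C assms(1) by (intro mult_left_mono) auto
  finally show ?thesis .
qed

context
  fixes m l :: nat and h :: real
  assumes m_eq: "m = 2 * l" and l_ge: "2 \<le> l" and h_def: "h = pi / m"
begin

lemma polygon_half_turn: "real l * (2 * h) = pi"
  using l_ge unfolding h_def m_eq by simp

lemma polygon_angle_bounds: "0 < h" "h \<le> pi/4" "0 < sin h" "0 < cos h" "sin h \<le> cos h"
proof -
  show h0: "0 < h" "h \<le> pi/4" using l_ge unfolding h_def m_eq by (simp_all add: field_simps)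
  then show "0 < sin h" "0 < cos h" by (auto intro!: sin_gt_zero cos_gt_zero)
  show "sin h \<le> cos h" using h0 by (intro sin_le_cos_le_pi4) auto
qed

lemma cross_form_bound_proper_angle:
  assumes "1 \<le> k" "k < l" "\<bar>t\<bar> \<le> sin h" "\<bar>u\<bar> \<le> sin h"
  shows "cos h * \<bar>t\<^sup>2 - u\<^sup>2\<bar> \<le> 2 * sin h * \<bar>((cos h)\<^sup>2 + t*u) * sin (k * (2*h))
           + cos h * (u - t) * cos (k * (2*h))\<bar>"
proof -
  note F = polygon_angle_bounds
  have "2*h \<le> k * (2*h)" using assms F by simp
  moreover have "k * (2*h) \<le> pi - 2*h"
  proof -
    have "k * (2*h) \<le> (real l - 1) * (2*h)" using assms F by (intro mult_right_mono) auto
    then show ?thesis using polygon_half_turn by (simp add: algebra_simps)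
  qed
  ultimately have "sin (2*h) \<le> sin (k * (2*h))" "\<bar>cos (k * (2*h))\<bar> \<le> cos (2*h)"
    using F by (intro sin_cos_bounds_symmetric_interval; simp)+
  then have "cos h * \<bar>t\<^sup>2 - u\<^sup>2\<bar> \<le> 2 * sin h * (((cos h)\<^sup>2 + t*u) * sin (k * (2*h))
           + cos h * (u - t) * cos (k * (2*h)))"
    using F assms by (intro edge_cross_inequality) (auto simp: sin_double cos_double)
  also have "\<dots> \<le> 2 * sin h * \<bar>((cos h)\<^sup>2 + t*u) * sin (k * (2*h))
           + cos h * (u - t) * cos (k * (2*h))\<bar>"
    using F by (intro mult_left_mono) auto
  finally show ?thesis .
qed

lemma cross_form_bound:
  assumes "k < m" "\<bar>t\<bar> \<le> sin h" "\<bar>u\<bar> \<le> sin h"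
  shows "cos h * \<bar>t\<^sup>2 - u\<^sup>2\<bar> \<le> 2 * sin h * \<bar>((cos h)\<^sup>2 + t*u) * sin (k * (2*h))
           + cos h * (u - t) * cos (k * (2*h))\<bar>"
proof -
  note F = polygon_angle_bounds
  have straight: "cos h * \<bar>t\<^sup>2 - u\<^sup>2\<bar> \<le> 2 * sin h * \<bar>cos h * (u - t)\<bar>"
  proof -
    have "\<bar>t\<^sup>2 - u\<^sup>2\<bar> = \<bar>t + u\<bar> * \<bar>u - t\<bar>"
      by (simp add: power2_eq_square abs_mult[symmetric] algebra_simps)
    also have "\<dots> \<le> 2 * sin h * \<bar>u - t\<bar>"
      using assms by (intro mult_right_mono) auto
    finally have "cos h * \<bar>t\<^sup>2 - u\<^sup>2\<bar> \<le> cos h * (2 * sin h * \<bar>u - t\<bar>)"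
      using F by (intro mult_left_mono) auto
    also have "\<dots> = 2 * sin h * \<bar>cos h * (u - t)\<bar>"
      using F by (simp add: abs_mult)
    finally show ?thesis .
  qed
  consider "k = 0" | "1 \<le> k" "k < l" | "k = l" | "l < k" by linarith
  then show ?thesis
  proof cases
    case 1
    then show ?thesis using straight by simp
  next
    case 2
    then show ?thesis using cross_form_bound_proper_angle assms by blast
  next
    case 3
    then show ?thesis using straight polygon_half_turn by simp
  next
    case 4
    define r where "r = k - l"
    have r: "1 \<le> r" "r < l" using 4 assms(1) unfolding r_def m_eq by auto
    have "real k * (2*h) = real r * (2*h) + pi"
      using 4 polygon_half_turn unfolding r_def by (simp add: of_nat_diff algebra_simps)
    then have "((cos h)\<^sup>2 + t*u) * sin (k * (2*h)) + cos h * (u - t) * cos (k * (2*h))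
       = - (((cos h)\<^sup>2 + t*u) * sin (r * (2*h)) + cos h * (u - t) * cos (r * (2*h)))"
      by (simp add: sin_add cos_add algebra_simps)
    then show ?thesis
      using cross_form_bound_proper_angle[OF r assms(2,3)] by (simp only: abs_minus_cancel)
  qed
qed

lemma rotated_points_cross_bound:
  assumes "k1 \<le> k2" "k2 < m" "\<bar>t\<bar> \<le> sin h" "\<bar>u\<bar> \<le> sin h"
  defines "p \<equiv> rotated_point ((2 * real k1 + 1) * h) (cos h) t"
    and "q \<equiv> rotated_point ((2 * real k2 + 1) * h) (cos h) u"
  shows "cos h * \<bar>(norm p)\<^sup>2 - (norm q)\<^sup>2\<bar> \<le> 2 * sin h * \<bar>cross2 p q\<bar>"
proof -
  have "(2 * real k2 + 1) * h - (2 * real k1 + 1) * h = real (k2 - k1) * (2*h)"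
    using assms(1) by (simp add: of_nat_diff algebra_simps)
  then have "cross2 p q = ((cos h)\<^sup>2 + t*u) * sin (real (k2 - k1) * (2*h))
           + cos h * (u - t) * cos (real (k2 - k1) * (2*h))"
    unfolding p_def q_def cross2_rotated_point by simp
  moreover have "(norm p)\<^sup>2 - (norm q)\<^sup>2 = t\<^sup>2 - u\<^sup>2"
    unfolding p_def q_def norm_rotated_point by simp
  ultimately show ?thesis
    using cross_form_bound[of "k2 - k1" t u] assms(2-4) by simp
qed

lemma regular_polygon_cross_bound:
  assumes "p \<in> regular_polygon m" "q \<in> regular_polygon m"
  shows "cos h * \<bar>(norm p)\<^sup>2 - (norm q)\<^sup>2\<bar> \<le> 2 * sin h * \<bar>cross2 p q\<bar>"
proof -
  obtain k1 t where k1: "k1 < m" "\<bar>t\<bar> \<le> sin h"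
    and p: "p = rotated_point ((2 * real k1 + 1) * h) (cos h) t"
    using regular_polygon_rotated_point[OF assms(1)] unfolding h_def by blast
  obtain k2 u where k2: "k2 < m" "\<bar>u\<bar> \<le> sin h"
    and q: "q = rotated_point ((2 * real k2 + 1) * h) (cos h) u"
    using regular_polygon_rotated_point[OF assms(2)] unfolding h_def by blast
  show ?thesis
  proof (cases "k1 \<le> k2")
    case True
    show ?thesis
      unfolding p q using True k2(1) k1(2) k2(2) by (rule rotated_points_cross_bound)
  next
    case False
    then have "cos h * \<bar>(norm q)\<^sup>2 - (norm p)\<^sup>2\<bar> \<le> 2 * sin h * \<bar>cross2 q p\<bar>"
      unfolding p q using k1 k2(2) by (intro rotated_points_cross_bound) auto
    then show ?thesis
      by (simp only: abs_cross2_commute abs_minus_commute)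
  qed
qed

end

definition first_edge_point :: "nat \<Rightarrow> real \<Rightarrow> real^2" where
  "first_edge_point m u = vector [1 - 2 * u * (sin (pi/m))\<^sup>2, 2 * u * sin (pi/m) * cos (pi/m)]"

definition first_edge_tangent :: "nat \<Rightarrow> real^2" where
  "first_edge_tangent m = vector [- sin (pi/m) * cos (pi/m), (cos (pi/m))\<^sup>2]"

lemma first_edge_point_mem:
  assumes "0 < m" "0 \<le> u" "u \<le> 1"
  shows "first_edge_point m u \<in> regular_polygon m"
proof -
  have "reg_vertex m (Suc 0) = vector [cos (2 * (pi/m)), sin (2 * (pi/m))]"
    unfolding reg_vertex_def by simp
  then have "(1 - u) *\<^sub>R reg_vertex m 0 + u *\<^sub>R reg_vertex m (Suc 0) = first_edge_point m u"
    unfolding cos_double_sin sin_double first_edge_point_def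
    by (simp add: reg_vertex_def vec_eq_iff forall_2 algebra_simps) (metis distrib_left mult_1_right)
  then show ?thesis using regular_polygon_memI[of 0 m u] assms by simp
qed

text \<open>For \<open>m = 4n\<close> the tangent vector of the first edge is the midpoint of the edge
  starting at the vertex \<open>(0, 1)\<close>.\<close>
lemma regular_polygon_quarter_turn:
  assumes "1 \<le> n"
  shows "vector [0, 1] \<in> regular_polygon (4 * n)"
    and "first_edge_tangent (4 * n) \<in> regular_polygon (4 * n)"
proof -
  define h where "h = pi / (4 * n)"
  have vn: "reg_vertex (4 * n) n = vector [0, 1]"
    using assms(1) by (simp add: reg_vertex_def)
  have "2 * pi * real (Suc n) / real (4 * n) = pi/2 + 2*h"
    using assms(1) unfolding h_def by (simp add: field_simps)
  then have vn1: "reg_vertex (4 * n) (Suc n) = vector [- 2 * sin h * cos h, 1 - 2 * (sin h)\<^sup>2]"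
    unfolding reg_vertex_def by (simp add: cos_add sin_add sin_double cos_double_sin)
  show "vector [0, 1] \<in> regular_polygon (4 * n)"
    using regular_polygon_memI[of n "4*n" 0] assms(1) vn by simp
  have "(1 - 1/2) *\<^sub>R reg_vertex (4 * n) n + (1/2) *\<^sub>R reg_vertex (4 * n) (Suc n)
      = first_edge_tangent (4 * n)"
    unfolding vn vn1 first_edge_tangent_def h_def by (simp add: vec_eq_iff forall_2 cos_squared_eq field_simps)
  then show "first_edge_tangent (4 * n) \<in> regular_polygon (4 * n)"
    using regular_polygon_memI[of n "4*n" "1/2"] assms(1) by simp
qed

lemma first_edge_point_add_tangent:
  assumes "cos (pi/m) \<noteq> 0"
  shows "first_edge_point m u + (a * sin (pi/m) / cos (pi/m)) *\<^sub>R first_edge_tangent m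
    = first_edge_point m (u + a/2)"
  using assms unfolding first_edge_point_def first_edge_tangent_def
  by (simp add: vec_eq_iff forall_2 field_simps power2_eq_square)

lemma first_edge_tangent_add_point:
  "first_edge_tangent m + (cos (pi/m) * sin (pi/m)) *\<^sub>R first_edge_point m u
    = (cos (pi/m))\<^sup>2 *\<^sub>R vector [0, 1] + (2 * (sin (pi/m))\<^sup>2 * u) *\<^sub>R first_edge_tangent m"
  unfolding first_edge_point_def first_edge_tangent_def
  by (simp add: vec_eq_iff forall_2 algebra_simps power2_eq_square)

lemma is_norm_minus: "is_norm N \<Longrightarrow> N (- v) = N v"
  unfolding is_norm_def by (metis abs_minus_cancel abs_one mult_1 scaleR_minus1_left)

lemma is_norm_continuous:
  assumes "is_norm N"
  shows "continuous_on S N"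
proof -
  define K where "K = N (axis 1 1) + N (axis 2 1)"
  have N: "\<And>v. 0 \<le> N v" "\<And>a v. N (a *\<^sub>R v) = \<bar>a\<bar> * N v" "\<And>u v. N (u + v) \<le> N u + N v"
    using assms unfolding is_norm_def by auto
  have bound: "N v \<le> K * norm v" for v :: "real^2"
  proof -
    have "v = v$1 *\<^sub>R axis 1 1 + v$2 *\<^sub>R axis 2 1"
      by (simp add: vec_eq_iff forall_2 axis_def)
    then have "N v \<le> \<bar>v$1\<bar> * N (axis 1 1) + \<bar>v$2\<bar> * N (axis 2 1)"
      using N(3)[of "v$1 *\<^sub>R axis 1 1" "v$2 *\<^sub>R axis 2 1"] by (simp add: N(2))
    also have "\<dots> \<le> norm v * N (axis 1 1) + norm v * N (axis 2 1)"
      using N(1) component_le_norm_cart[of v] by (intro add_mono mult_right_mono) auto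
    finally show ?thesis unfolding K_def by (simp add: algebra_simps)
  qed
  have "K-lipschitz_on S N"
  proof (rule lipschitz_onI)
    fix u v :: "real^2"
    have "N u \<le> N v + N (u - v)" "N v \<le> N u + N (- (u - v))"
      using N(3)[of v "u - v"] N(3)[of u "v - u"] by simp_all
    then show "dist (N u) (N v) \<le> K * dist u v"
      using bound[of "u - v"] unfolding is_norm_minus[OF assms]
      by (simp add: dist_real_def dist_norm abs_le_iff)
  qed (use N(1) in \<open>simp add: K_def\<close>)
  then show ?thesis by (rule lipschitz_on_continuous_on)
qed

text \<open>Intermediate value theorem: \<open>N (z + x) - N (z - x)\<close> changes sign between \<open>a = 0\<close> and
  \<open>a = pi\<close>.\<close>
lemma is_norm_bisector_meets_arc:
  assumes "is_norm N" "x \<noteq> 0" "0 < c" "c \<le> 1"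
  obtains a where "c *\<^sub>R (cos a *\<^sub>R x + sin a *\<^sub>R y) \<in> bis N (-x) x"
proof -
  have N: "\<And>v. 0 \<le> N v" "\<And>v. N v = 0 \<longleftrightarrow> v = 0" "\<And>a v. N (a *\<^sub>R v) = \<bar>a\<bar> * N v"
    using assms(1) unfolding is_norm_def by auto
  define g where "g = (\<lambda>a::real. c *\<^sub>R (cos a *\<^sub>R x + sin a *\<^sub>R y))"
  define f where "f = (\<lambda>a. N (g a + x) - N (g a - x))"
  have g: "continuous_on {0..pi} g" unfolding g_def by (intro continuous_intros)
  have "continuous_on {0..pi} (N \<circ> (\<lambda>a. g a + x))" "continuous_on {0..pi} (N \<circ> (\<lambda>a. g a - x))"
    using g by (intro continuous_on_compose is_norm_continuous[OF assms(1)] continuous_intros; assumption)+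
  then have "continuous_on {0..pi} f"
    unfolding f_def o_def by (intro continuous_intros)
  moreover have "f 0 = 2 * c * N x" "f pi = - 2 * c * N x"
  proof -
    have ends: "g 0 + x = (1 + c) *\<^sub>R x" "g 0 - x = - ((1 - c) *\<^sub>R x)"
      "g pi + x = (1 - c) *\<^sub>R x" "g pi - x = - ((1 + c) *\<^sub>R x)"
      unfolding g_def by (simp_all add: algebra_simps)
    show "f 0 = 2 * c * N x" "f pi = - 2 * c * N x"
      unfolding f_def ends is_norm_minus[OF assms(1)] N(3) using assms(3,4) by (simp_all add: algebra_simps)
  qed
  moreover have "0 < N x" using N(1,2)[of x] assms(2) by linarith
  ultimately obtain a where "f a = 0"
    using IVT2'[of f pi 0 0] assms(3) by auto
  then show ?thesis using that unfolding bis_def f_def g_def by simp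
qed

locale polygonal_norm =
  fixes m :: nat and N :: "real^2 \<Rightarrow> real" and T :: "real^2 \<Rightarrow> real^2"
  assumes is_norm: "is_norm N" and linear_T: "linear T" and bij_T: "bij T"
    and unit_circle_eq: "unit_circle N = T ` regular_polygon m"
    and even_m: "even m" and four_le_m: "4 \<le> m"
begin

lemma N_nonneg: "0 \<le> N v"
  and N_eq_0_iff: "N v = 0 \<longleftrightarrow> v = 0"
  and N_scaleR: "N (a *\<^sub>R v) = \<bar>a\<bar> * N v"
  and N_triangle: "N (u + v) \<le> N u + N v"
  using is_norm unfolding is_norm_def by auto

lemma N_pos: "v \<noteq> 0 \<Longrightarrow> 0 < N v"
  using N_nonneg[of v] N_eq_0_iff[of v] by linarith

lemma obtain_half:
  obtains l where "m = 2 * l" "2 \<le> l"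
  using even_m four_le_m by (auto elim!: evenE)

lemma cos_sin_facts: "0 < sin (pi/m)" "0 < cos (pi/m)" "sin (pi/m) \<le> cos (pi/m)"
  using polygon_angle_bounds[OF _ _ refl] obtain_half by metis+

lemma linear_inv_T: "linear (inv T)"
  using linear_T bij_T by (simp add: bij_def inj_linear_imp_inv_linear)

lemma inv_T_apply [simp]: "inv T (T v) = v" and T_inv_T_apply [simp]: "T (inv T v) = v"
  using bij_T by (simp_all add: bij_def inv_f_f surj_f_inv_f)

lemma unit_circle_iff: "N v = 1 \<longleftrightarrow> inv T v \<in> regular_polygon m"
proof -
  have "N v = 1 \<longleftrightarrow> v \<in> T ` regular_polygon m"
    using unit_circle_eq unfolding unit_circle_def by blast
  also have "\<dots> \<longleftrightarrow> inv T v \<in> regular_polygon m"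
    by (metis T_inv_T_apply image_iff inv_T_apply)
  finally show ?thesis .
qed

lemma N_T_polygon: "p \<in> regular_polygon m \<Longrightarrow> N (T p) = 1"
  by (simp add: unit_circle_iff)

lemma norm_inv_T_bounds: "cos (pi/m) * N v \<le> norm (inv T v)" "norm (inv T v) \<le> N v"
proof -
  have "cos (pi/m) * N v \<le> norm (inv T v) \<and> norm (inv T v) \<le> N v"
  proof (cases "v = 0")
    case True
    then show ?thesis using N_eq_0_iff[of 0] linear_0[OF linear_inv_T] by simp
  next
    case False
    define u where "u = (1 / N v) *\<^sub>R v"
    have "N u = 1" unfolding u_def N_scaleR using N_pos[OF False] by simp
    then have "inv T u \<in> regular_polygon m" by (simp add: unit_circle_iff)
    moreover have "inv T v = N v *\<^sub>R inv T u"
      unfolding u_def linear_scale[OF linear_inv_T] using N_pos[OF False] by simp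
    moreover note regular_polygon_norm_bounds[of "inv T u" m]
    ultimately have "norm (inv T v) = N v * norm (inv T u)"
      and "cos (pi/m) \<le> norm (inv T u)" "norm (inv T u) \<le> 1"
      using N_nonneg[of v] by simp_all
    then show ?thesis
      using N_nonneg[of v] by (metis mult.commute mult_left_le mult_right_mono)
  qed
  then show "cos (pi/m) * N v \<le> norm (inv T v)" "norm (inv T v) \<le> N v" by simp_all
qed

lemma bisector_cross_bound:
  assumes "N x = 1" "z \<in> bis N (-x) x"
  defines "Z \<equiv> inv T z" and "X \<equiv> inv T x"
  shows "cos (pi/m) * \<bar>Z \<bullet> X\<bar> \<le> sin (pi/m) * \<bar>cross2 Z X\<bar>"
proof -
  define r where "r = N (z + x)"
  have eq: "N (z - x) = r" using assms(2) unfolding bis_def r_def by simp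
  have "0 < r"
  proof (rule ccontr)
    assume "\<not> 0 < r"
    then have "r = 0" using N_nonneg[of "z + x"] unfolding r_def by linarith
    then have "N (z + x) = 0" "N (z - x) = 0" using eq unfolding r_def by simp_all
    then have "z + x = 0" "z - x = 0" using N_eq_0_iff by simp_all
    moreover have "2 *\<^sub>R x = (z + x) - (z - x)" by (simp add: scaleR_2)
    ultimately have "x = 0" by simp
    then show False using assms(1) N_eq_0_iff[of 0] by simp
  qed
  have "inv T ((1/r) *\<^sub>R (z + x)) \<in> regular_polygon m"
    and "inv T ((1/r) *\<^sub>R (z - x)) \<in> regular_polygon m"
    using \<open>0 < r\<close> eq unfolding unit_circle_iff[symmetric] r_def by (simp_all add: N_scaleR)
  then have "(1/r) *\<^sub>R (Z + X) \<in> regular_polygon m" "(1/r) *\<^sub>R (Z - X) \<in> regular_polygon m"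
    unfolding Z_def X_def
    by (simp_all add: linear_add[OF linear_inv_T] linear_diff[OF linear_inv_T] linear_scale[OF linear_inv_T])
  then have "cos (pi/m) * \<bar>(norm ((1/r) *\<^sub>R (Z + X)))\<^sup>2 - (norm ((1/r) *\<^sub>R (Z - X)))\<^sup>2\<bar>
      \<le> 2 * sin (pi/m) * \<bar>cross2 ((1/r) *\<^sub>R (Z + X)) ((1/r) *\<^sub>R (Z - X))\<bar>"
    using regular_polygon_cross_bound[OF _ _ refl] obtain_half by metis
  moreover have "(norm ((1/r) *\<^sub>R (Z + X)))\<^sup>2 - (norm ((1/r) *\<^sub>R (Z - X)))\<^sup>2 = (1/r)\<^sup>2 * (4 * (Z \<bullet> X))"
    unfolding norm_scaleR power_mult_distrib power2_abs norm_add_power2_diff[symmetric]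
    by (simp add: right_diff_distrib)
  moreover have "cross2 ((1/r) *\<^sub>R (Z + X)) ((1/r) *\<^sub>R (Z - X)) = (1/r)\<^sup>2 * (- 2 * cross2 Z X)"
    unfolding cross2_scaleR_left cross2_scaleR_right cross2_add_diff by (simp add: power2_eq_square)
  ultimately have "(4 * (1/r)\<^sup>2) * (cos (pi/m) * \<bar>Z \<bullet> X\<bar>) \<le> (4 * (1/r)\<^sup>2) * (sin (pi/m) * \<bar>cross2 Z X\<bar>)"
    by (simp add: abs_mult algebra_simps)
  then show ?thesis using \<open>0 < r\<close> by simp
qed

lemma inner_proj_sine_lower_bound:
  assumes "N x = 1" "w \<in> inner_proj N x"
  shows "(cos (pi/m))\<^sup>2 \<le> N (w + t *\<^sub>R x)"
proof -
  obtain z where w: "w = (1 / N z) *\<^sub>R z" and z: "z \<in> bis N (-x) x" "z \<noteq> 0"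
    using assms(2) unfolding inner_proj_def by blast
  define W where "W = inv T w"
  define X where "X = inv T x"
  have "cos (pi/m) * \<bar>W \<bullet> X\<bar> \<le> sin (pi/m) * \<bar>cross2 W X\<bar>"
  proof -
    have "W = (1 / N z) *\<^sub>R inv T z"
      unfolding W_def w by (simp add: linear_scale[OF linear_inv_T])
    moreover have "cos (pi/m) * \<bar>inv T z \<bullet> X\<bar> \<le> sin (pi/m) * \<bar>cross2 (inv T z) X\<bar>"
      unfolding X_def by (rule bisector_cross_bound[OF assms(1) z(1)])
    ultimately show ?thesis
      using N_pos[OF z(2)] by (simp add: cross2_scaleR_left abs_mult mult.left_commute[of "cos (pi/m)"]
          mult.left_commute[of "sin (pi/m)"] divide_right_mono)
  qed
  moreover have "X \<noteq> 0"
    using norm_inv_T_bounds(1)[of x] assms(1) cos_sin_facts unfolding X_def by auto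
  ultimately have "cos (pi/m) * norm W \<le> norm (W + t *\<^sub>R X)"
    using cos_sin_facts by (intro norm_add_scaleR_lower_bound) auto
  also have "\<dots> = norm (inv T (w + t *\<^sub>R x))"
    unfolding W_def X_def by (simp add: linear_add[OF linear_inv_T] linear_scale[OF linear_inv_T])
  also have "\<dots> \<le> N (w + t *\<^sub>R x)"
    by (rule norm_inv_T_bounds(2))
  finally have "cos (pi/m) * norm W \<le> N (w + t *\<^sub>R x)" .
  moreover have "cos (pi/m) \<le> norm W"
    using norm_inv_T_bounds(1)[of w] N_pos[OF z(2)] unfolding W_def w by (simp add: N_scaleR)
  ultimately show ?thesis
    using cos_sin_facts by (smt (verit) mult_left_mono power2_eq_square)
qed

lemma inner_proj_nonempty:
  assumes "N x = 1"
  shows "inner_proj N x \<noteq> {}"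
proof -
  define c where "c = cos (pi/m)"
  have c: "0 < c" "c \<le> 1" unfolding c_def using cos_sin_facts by auto
  have "x \<noteq> 0" using assms N_eq_0_iff[of 0] by auto
  then obtain a where bis: "c *\<^sub>R (cos a *\<^sub>R x + sin a *\<^sub>R T (perp2 (inv T x))) \<in> bis N (-x) x"
    by (rule is_norm_bisector_meets_arc[OF is_norm _ c])
  define z where "z = c *\<^sub>R (cos a *\<^sub>R x + sin a *\<^sub>R T (perp2 (inv T x)))"
  have inv_z: "norm (inv T z) = c * norm (inv T x)"
    unfolding z_def using c
    by (simp add: linear_add[OF linear_inv_T] linear_scale[OF linear_inv_T] norm_cos_sin_perp2)
  have "c * N z \<le> norm (inv T z)"
    unfolding c_def by (rule norm_inv_T_bounds(1))
  also have "\<dots> \<le> c * 1"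
    unfolding inv_z using norm_inv_T_bounds(2)[of x] assms c by (intro mult_left_mono) auto
  finally have "N z \<le> 1" using c by simp
  moreover have "z \<noteq> 0"
    using inv_z norm_inv_T_bounds(1)[of x] assms c linear_0[OF linear_inv_T]
    unfolding c_def[symmetric] by auto
  ultimately have "(1 / N z) *\<^sub>R z \<in> inner_proj N x"
    using bis unfolding inner_proj_def unit_ball_def z_def by blast
  then show ?thesis by blast
qed

text \<open>\<open>x \<plusminus> z\<close> stay on the first edge because \<open>z\<close> is parallel to it.\<close>
lemma first_edge_bisector:
  assumes "0 < \<sigma>" "\<sigma> \<le> 1/2"
  defines "x \<equiv> T (first_edge_point m \<sigma>)"
  shows "T ((\<sigma> * sin (pi/m) / cos (pi/m)) *\<^sub>R first_edge_tangent m) \<in> bis N (- x) x"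
    (is "T ?z \<in> _")
proof -
  have "first_edge_point m \<sigma> + ?z = first_edge_point m (3/2 * \<sigma>)"
    and "first_edge_point m \<sigma> - ?z = first_edge_point m (\<sigma>/2)"
    using first_edge_point_add_tangent[of m \<sigma> \<sigma>] first_edge_point_add_tangent[of m \<sigma> "- \<sigma>"]
      cos_sin_facts by simp_all
  moreover have "first_edge_point m (3/2 * \<sigma>) \<in> regular_polygon m"
    and "first_edge_point m (\<sigma>/2) \<in> regular_polygon m"
    using assms four_le_m by (intro first_edge_point_mem; simp)+
  ultimately have "N (x + T ?z) = 1" "N (x - T ?z) = 1"
    unfolding x_def using N_T_polygon
    by (simp_all add: linear_add[OF linear_T, symmetric] linear_diff[OF linear_T, symmetric])
  then show ?thesis
    unfolding bis_def using is_norm_minus[OF is_norm, of "x - T ?z"] by (simp add: add.commute)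
qed

lemma first_edge_inner_proj:
  assumes "m = 4 * n" "0 < \<sigma>" "\<sigma> \<le> 1/2"
  shows "T (first_edge_tangent m) \<in> inner_proj N (T (first_edge_point m \<sigma>))"
proof -
  define k where "k = \<sigma> * sin (pi/m) / cos (pi/m)"
  have k: "0 < k" "k \<le> 1"
  proof -
    show "0 < k" unfolding k_def using assms cos_sin_facts by simp
    have "\<sigma> * (sin (pi/m) / cos (pi/m)) \<le> 1 * 1"
      using assms cos_sin_facts by (intro mult_mono) auto
    then show "k \<le> 1" unfolding k_def by simp
  qed
  have "first_edge_tangent m \<in> regular_polygon m"
    using regular_polygon_quarter_turn(2)[of n] assms(1) four_le_m by simp
  then have Nk: "N (T (k *\<^sub>R first_edge_tangent m)) = k"
    using N_T_polygon k(1) by (simp add: linear_scale[OF linear_T] N_scaleR)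
  have "(1 / k) *\<^sub>R T (k *\<^sub>R first_edge_tangent m) \<in> inner_proj N (T (first_edge_point m \<sigma>))"
    using first_edge_bisector[OF assms(2,3)] k Nk N_eq_0_iff[of "T (k *\<^sub>R first_edge_tangent m)"]
    unfolding inner_proj_def unit_ball_def k_def
    by (intro CollectI exI[of _ "T (k *\<^sub>R first_edge_tangent m)"]) (auto simp: k_def)
  moreover have "(1 / k) *\<^sub>R T (k *\<^sub>R first_edge_tangent m) = T (first_edge_tangent m)"
    using k(1) by (simp add: linear_scale[OF linear_T])
  ultimately show ?thesis by simp
qed

lemma first_edge_sine_bound:
  assumes "m = 4 * n" "0 \<le> \<sigma>"
  shows "N (T (first_edge_tangent m) + (cos (pi/m) * sin (pi/m)) *\<^sub>R T (first_edge_point m \<sigma>))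
    \<le> (cos (pi/m))\<^sup>2 + 2 * (sin (pi/m))\<^sup>2 * \<sigma>"
proof -
  have M: "first_edge_tangent m \<in> regular_polygon m" and e2: "vector [0, 1] \<in> regular_polygon m"
    using regular_polygon_quarter_turn[of n] assms(1) four_le_m by simp_all
  have "T (first_edge_tangent m) + (cos (pi/m) * sin (pi/m)) *\<^sub>R T (first_edge_point m \<sigma>)
      = (cos (pi/m))\<^sup>2 *\<^sub>R T (vector [0, 1]) + (2 * (sin (pi/m))\<^sup>2 * \<sigma>) *\<^sub>R T (first_edge_tangent m)"
    using first_edge_tangent_add_point[of m \<sigma>]
    by (simp only: linear_add[OF linear_T, symmetric] linear_scale[OF linear_T, symmetric])
  also have "N \<dots> \<le> N ((cos (pi/m))\<^sup>2 *\<^sub>R T (vector [0, 1]))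
      + N ((2 * (sin (pi/m))\<^sup>2 * \<sigma>) *\<^sub>R T (first_edge_tangent m))"
    by (rule N_triangle)
  also have "\<dots> = (cos (pi/m))\<^sup>2 + 2 * (sin (pi/m))\<^sup>2 * \<sigma>"
    using N_T_polygon[OF e2] N_T_polygon[OF M] assms(2) by (simp add: N_scaleR)
  finally show ?thesis .
qed

lemma inner_proj_sine_upper_bound:
  assumes "m = 4 * n" "0 < e"
  shows "\<exists>x. N x = 1 \<and> (\<exists>w\<in>inner_proj N x. \<exists>t. N (w + t *\<^sub>R x) \<le> (cos (pi/m))\<^sup>2 + e)"
proof -
  define \<sigma> where "\<sigma> = min (1/2) (e/2)"
  have \<sigma>: "0 < \<sigma>" "\<sigma> \<le> 1/2" "\<sigma> \<le> e/2" unfolding \<sigma>_def using assms(2) by auto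
  have "2 * (sin (pi/m))\<^sup>2 * \<sigma> \<le> 2 * 1 * (e/2)"
    using \<sigma> by (intro mult_mono) (auto simp: abs_le_square_iff[of _ 1, simplified, symmetric])
  then have "N (T (first_edge_tangent m) + (cos (pi/m) * sin (pi/m)) *\<^sub>R T (first_edge_point m \<sigma>))
      \<le> (cos (pi/m))\<^sup>2 + e"
    using first_edge_sine_bound[OF assms(1), of \<sigma>] \<sigma>(1) by simp
  moreover have "N (T (first_edge_point m \<sigma>)) = 1"
    using four_le_m \<sigma> by (intro N_T_polygon first_edge_point_mem) auto
  ultimately show ?thesis
    using first_edge_inner_proj[OF assms(1) \<sigma>(1,2)] by blast
qed

end

lemma c_B_eqI:
  assumes nonempty: "\<And>x. x \<in> unit_circle N \<Longrightarrow> inner_proj N x \<noteq> {}"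
    and lower: "\<And>x w t. x \<in> unit_circle N \<Longrightarrow> w \<in> inner_proj N x \<Longrightarrow> C \<le> N (w + t *\<^sub>R x)"
    and upper: "\<And>e. 0 < e \<Longrightarrow> \<exists>x\<in>unit_circle N. \<exists>w\<in>inner_proj N x. \<exists>t. N (w + t *\<^sub>R x) \<le> C + e"
  shows "c_B N = C"
proof -
  have sine_ge: "C \<le> sine_fn N w x" if "x \<in> unit_circle N" "w \<in> inner_proj N x" for x w
    unfolding sine_fn_def using lower[OF that] by (intro cINF_greatest) auto
  have inner_ge: "C \<le> (INF w\<in>inner_proj N x. sine_fn N w x)" if "x \<in> unit_circle N" for x
    using nonempty[OF that] sine_ge[OF that] by (intro cINF_greatest) auto
  have "unit_circle N \<noteq> {}" using upper[of 1] by auto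
  then have "C \<le> c_B N"
    unfolding c_B_def by (rule cINF_greatest) (rule inner_ge)
  moreover have "c_B N \<le> C + e" if e: "0 < e" for e
  proof -
    obtain x w t where x: "x \<in> unit_circle N" and w: "w \<in> inner_proj N x"
      and le: "N (w + t *\<^sub>R x) \<le> C + e"
      using upper[OF e] by blast
    have "c_B N \<le> (INF w\<in>inner_proj N x. sine_fn N w x)"
      unfolding c_B_def using inner_ge by (intro cINF_lower[OF _ x] bdd_belowI2) auto
    also have "\<dots> \<le> sine_fn N w x"
      using sine_ge[OF x] by (intro cINF_lower[OF _ w] bdd_belowI2) auto
    also have "\<dots> \<le> N (w + t *\<^sub>R x)"
      unfolding sine_fn_def using lower[OF x w] by (intro cINF_lower bdd_belowI2) auto
    finally show ?thesis using le by linarith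
  qed
  ultimately show ?thesis by (meson field_le_epsilon order_antisym)
qed

theorem proposition4p3:
  fixes n :: nat and N :: "real^2 \<Rightarrow> real"
  assumes "n \<ge> 1"
    and "is_norm N"
    and "affine_regular_polygon (4 * n) (unit_circle N)"
  shows "c_B N = (cos (pi / (4 * real n)))^2"
proof -
  obtain T where T: "linear T" "bij T" "unit_circle N = T ` regular_polygon (4 * n)"
    using assms(3) unfolding affine_regular_polygon_def by blast
  interpret polygonal_norm "4 * n" N T
    by (rule polygonal_norm.intro) (use assms(1,2) T in auto)
  have "c_B N = (cos (pi / real (4 * n)))\<^sup>2"
  proof (rule c_B_eqI)
    show "inner_proj N x \<noteq> {}" if "x \<in> unit_circle N" for x
      using that inner_proj_nonempty unfolding unit_circle_def by blast
    show "(cos (pi / real (4 * n)))\<^sup>2 \<le> N (w + t *\<^sub>R x)"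
      if "x \<in> unit_circle N" "w \<in> inner_proj N x" for x w t
      using that inner_proj_sine_lower_bound unfolding unit_circle_def by blast
    show "\<exists>x\<in>unit_circle N. \<exists>w\<in>inner_proj N x. \<exists>t. N (w + t *\<^sub>R x) \<le> (cos (pi / real (4 * n)))\<^sup>2 + e"
      if "0 < e" for e
      using inner_proj_sine_upper_bound[OF refl that] unfolding unit_circle_def by blast
  qed
  then show ?thesis by simp
qed

end
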